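(* Let $\mathbb{K}\in\{\mathbb{R},\mathbb{C}\}$ and $w_1,w_2\in\mathsf{GL}_d(\mathbb{K})$. Then for each $i\in\{1,2\}$, \[\frac{\sigma_1}{\sigma_2}(w_1w_2)\ge\frac{\sigma_d(w_i)^2}{\sigma_1(w_i)^2}\,\frac{\sigma_1}{\sigma_2}(w_1)\,\frac{\sigma_1}{\sigma_2}(w_2).\]
   Context: $\sigma_1(g)\ge\dots\ge\sigma_d(g)$ are the singular values of $g$, and $\frac{\sigma_i}{\sigma_j}(g)=\sigma_i(g)/\sigma_j(g)$. *)

theory Defs
  imports "Jordan_Normal_Form.Schur_Decomposition" "HOL-Computational_Algebra.Polynomial"
begin

text \<open>Singular values of a square matrix A: the square roots of the eigenvalues of
  A^* A (counted with algebraic multiplicity, i.e. the roots of its characteristic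
  polynomial), listed in non-increasing order.  sv A k is the k-th singular value,
  with 1-based index k in 1..dim_row A.\<close>

definition sv_list_real :: "real mat \<Rightarrow> real list" where
  "sv_list_real A = rev (sorted_list_of_multiset
     (image_mset sqrt (proots (char_poly (mat_adjoint A * A)))))"

definition sv_real :: "real mat \<Rightarrow> nat \<Rightarrow> real" where
  "sv_real A k = sv_list_real A ! (k - 1)"

definition sv_list_complex :: "complex mat \<Rightarrow> real list" where
  "sv_list_complex A = rev (sorted_list_of_multiset
     (image_mset (\<lambda>z. sqrt (Re z)) (proots (char_poly (mat_adjoint A * A)))))"

definition sv_complex :: "complex mat \<Rightarrow> nat \<Rightarrow> real" where
  "sv_complex A k = sv_list_complex A ! (k - 1)"

end

theory Submission
  imports Defs
begin

(* Write sigma_k(A) for the singular values.  The Hermitian matrix A^* A is unitarily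
   diagonalisable with eigenvalues sigma_k(A)^2 >= 0, so in suitable orthonormal coordinates
   |A x|^2 = sum_k sigma_k(A)^2 |y_k|^2.  This gives the variational facts used for products:
   sigma_d(A) |x| <= |A x| <= sigma_1(A) |x|; sigma_1 is attained at some u with
   |A x| <= sigma_2(A) |x| on the orthogonal complement of u; and every hyperplane contains
   some x <> 0 with |A x| >= sigma_2(A) |x|.  Testing the product w1 w2 on such vectors yields
     sigma_1(w1 w2) >= sigma_d(w1) sigma_1(w2),   sigma_1(w1 w2) >= sigma_1(w1) sigma_d(w2),
     sigma_2(w1 w2) <= sigma_1(w1) sigma_2(w2),   sigma_2(w1 w2) <= sigma_2(w1) sigma_1(w2).
   For i = 1 the first and third give
     (sigma_1/sigma_2)(w1 w2) >= sigma_d(w1) sigma_1(w2) / (sigma_1(w1) sigma_2(w2)),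
   which dominates the claimed bound because sigma_d(w1) <= sigma_2(w1); i = 2 is symmetric.
   A real matrix has the same singular values as its complexification. *)

section \<open>Adjoints and the Hermitian norm\<close>

lemma dim_row_mat_adjoint[simp]: "dim_row (mat_adjoint A) = dim_col A"
  and dim_col_mat_adjoint[simp]: "dim_col (mat_adjoint A) = dim_row A"
  unfolding mat_adjoint_def by auto

lemma mat_adjoint_carrier[simp]: "A \<in> carrier_mat n m \<Longrightarrow> mat_adjoint A \<in> carrier_mat m n"
  unfolding carrier_mat_def by auto

lemma index_mat_adjoint[simp]:
  "i < dim_col A \<Longrightarrow> j < dim_row A \<Longrightarrow> mat_adjoint A $$ (i, j) = conjugate (A $$ (j, i))"
  unfolding mat_adjoint_def by (simp add: mat_of_rows_def)

lemma mat_adjoint_adjoint[simp]: "mat_adjoint (mat_adjoint A) = A"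
  by (rule eq_matI) auto

lemma conjugate_one[simp]: "conjugate (1 :: 'a :: conjugatable_field) = 1"
  by (metis conjugate_dist_mul conjugate_id mult_1_left mult_1_right)

lemma mat_adjoint_one[simp]: "mat_adjoint (1\<^sub>m n :: 'a :: conjugatable_field mat) = 1\<^sub>m n"
  by (rule eq_matI) auto

lemma mat_adjoint_mult:
  fixes A B :: "'a :: conjugatable_field mat"
  assumes "A \<in> carrier_mat n m" "B \<in> carrier_mat m k"
  shows "mat_adjoint (A * B) = mat_adjoint B * mat_adjoint A"
  by (rule eq_matI) (use assms in \<open>auto simp: scalar_prod_def sum_conjugate conjugate_dist_mul mult.commute\<close>)

lemma cscalar_prod_adjoint:
  fixes A :: "'a :: conjugatable_field mat"
  assumes A: "A \<in> carrier_mat n m" and x: "x \<in> carrier_vec m" and y: "y \<in> carrier_vec n"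
  shows "(A *\<^sub>v x) \<bullet>c y = x \<bullet>c (mat_adjoint A *\<^sub>v y)"
proof -
  have "(A *\<^sub>v x) \<bullet>c y = (\<Sum>i<n. \<Sum>j<m. A $$ (i, j) * x $ j * conjugate (y $ i))"
    using assms by (simp add: scalar_prod_def lessThan_atLeast0 sum_distrib_right)
  also have "\<dots> = (\<Sum>j<m. \<Sum>i<n. A $$ (i, j) * x $ j * conjugate (y $ i))"
    by (rule sum.swap)
  also have "\<dots> = x \<bullet>c (mat_adjoint A *\<^sub>v y)"
    using assms by (simp add: scalar_prod_def lessThan_atLeast0 sum_distrib_left sum_conjugate
        conjugate_dist_mul mult_ac)
  finally show ?thesis .
qed

lemma index_adjoint_mult_self:
  fixes W :: "'a :: conjugatable_field mat"
  assumes "i < dim_col W" "j < dim_col W"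
  shows "(mat_adjoint W * W) $$ (i, j) = col W j \<bullet>c col W i"
  using assms by (simp add: scalar_prod_def mult.commute)

definition cnorm2 :: "complex vec \<Rightarrow> real" where
  "cnorm2 x = (\<Sum>k<dim_vec x. (cmod (x $ k))\<^sup>2)"

lemma cscalar_prod_self: "x \<bullet>c x = complex_of_real (cnorm2 x)"
  unfolding cnorm2_def scalar_prod_def of_real_sum
  by (simp add: lessThan_atLeast0 flip: complex_norm_square)

lemma cnorm2_nonneg: "cnorm2 x \<ge> 0"
  unfolding cnorm2_def by (auto intro: sum_nonneg)

lemma cnorm2_pos_iff: "x \<in> carrier_vec n \<Longrightarrow> cnorm2 x > 0 \<longleftrightarrow> x \<noteq> 0\<^sub>v n"
  using conjugate_square_greater_0_vec[of x n] by (simp add: cscalar_prod_self less_complex_def)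

lemma cnorm2_mult_mat_vec:
  fixes A :: "complex mat"
  assumes A: "A \<in> carrier_mat n m" and x: "x \<in> carrier_vec m"
  shows "complex_of_real (cnorm2 (A *\<^sub>v x)) = x \<bullet>c ((mat_adjoint A * A) *\<^sub>v x)"
  using cscalar_prod_adjoint[OF A x, of "A *\<^sub>v x"] assms
  by (simp add: cscalar_prod_self assoc_mult_mat_vec[of _ m n _ m])

lemma cnorm2_unitary_mult:
  fixes U :: "complex mat"
  assumes "U \<in> carrier_mat n n" "mat_adjoint U * U = 1\<^sub>m n" "x \<in> carrier_vec n"
  shows "cnorm2 (U *\<^sub>v x) = cnorm2 x"
  using cnorm2_mult_mat_vec[of U n n x] assms by (simp add: cscalar_prod_self)

lemma unitary_mat_of_normalized_cols:
  assumes ws: "set ws \<subseteq> carrier_vec n" "length ws = n" "corthogonal ws"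
  defines "W \<equiv> mat_of_cols n (map (\<lambda>w. complex_of_real (1 / sqrt (cnorm2 w)) \<cdot>\<^sub>v w) ws)"
  shows "W \<in> carrier_mat n n" "mat_adjoint W * W = 1\<^sub>m n"
proof -
  show W: "W \<in> carrier_mat n n" unfolding W_def using ws by auto
  have col: "col W i = complex_of_real (1 / sqrt (cnorm2 (ws ! i))) \<cdot>\<^sub>v ws ! i" if "i < n" for i
    unfolding W_def using ws that by (subst col_mat_of_cols) auto
  have unit: "(1 / sqrt (cnorm2 (ws ! i)))\<^sup>2 * cnorm2 (ws ! i) = 1" if "i < n" for i
  proof -
    have "ws ! i \<bullet>c ws ! i \<noteq> 0" using corthogonalD[OF ws(3)] ws that by auto
    then have "cnorm2 (ws ! i) > 0"
      using cnorm2_nonneg[of "ws ! i"] by (auto simp: cscalar_prod_self less_le)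
    then show ?thesis by (simp add: power_divide)
  qed
  show "mat_adjoint W * W = 1\<^sub>m n"
  proof (rule eq_matI)
    fix i j assume "i < dim_row (1\<^sub>m n)" "j < dim_col (1\<^sub>m n)"
    then have i: "i < n" and j: "j < n" by auto
    have "(mat_adjoint W * W) $$ (i, j) = col W j \<bullet>c col W i"
      by (rule index_adjoint_mult_self) (use i j W in auto)
    also have "\<dots> =
      complex_of_real (1 / sqrt (cnorm2 (ws ! j)) * (1 / sqrt (cnorm2 (ws ! i)))) * (ws ! j \<bullet>c ws ! i)"
    proof -
      have "ws ! j \<in> carrier_vec n" "ws ! i \<in> carrier_vec n"
        using i j ws nth_mem[of i ws] nth_mem[of j ws] by auto
      then show ?thesis
        using i j by (simp add: col conjugate_smult_vec)
    qed
    also have "\<dots> = 1\<^sub>m n $$ (i, j)"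
      using corthogonalD[OF ws(3), of j i] unit[OF i] i j ws
      by (cases "i = j") (auto simp: cscalar_prod_self power2_eq_square simp del: of_real_mult)
    finally show "(mat_adjoint W * W) $$ (i, j) = 1\<^sub>m n $$ (i, j)" .
  qed (use W in auto)
qed

lemma exists_unitary_first_col:
  fixes v :: "complex vec"
  assumes v: "v \<in> carrier_vec n" and v0: "v \<noteq> 0\<^sub>v n"
  obtains W c where "W \<in> carrier_mat n n" "mat_adjoint W * W = 1\<^sub>m n" "col W 0 = c \<cdot>\<^sub>v v"
proof -
  interpret cof_vec_space n "TYPE(complex)" .
  define bs where "bs = basis_completion v"
  from basis_completion[OF v v0, folded bs_def] have bs: "distinct bs" "\<not> lin_dep (set bs)"
    "set bs \<subseteq> carrier_vec n" "hd bs = v" "length bs = n" by auto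
  have "n > 0" using v v0 by (cases n) auto
  with bs obtain vs where bs_v: "bs = v # vs" by (cases bs) auto
  define ws where "ws = gram_schmidt n bs"
  from gram_schmidt_result[OF bs(3,1,2) refl, folded ws_def] bs
  have ws: "set ws \<subseteq> carrier_vec n" "length ws = n" "corthogonal ws" by auto
  have "hd ws = v" using gram_schmidt_hd[OF v, of vs] unfolding ws_def bs_v .
  define W where "W = mat_of_cols n (map (\<lambda>w. complex_of_real (1 / sqrt (cnorm2 w)) \<cdot>\<^sub>v w) ws)"
  have "col W 0 = complex_of_real (1 / sqrt (cnorm2 v)) \<cdot>\<^sub>v v"
    unfolding W_def using ws \<open>n > 0\<close> \<open>hd ws = v\<close>
    by (subst col_mat_of_cols) (auto simp: hd_conv_nth[symmetric])
  then show ?thesis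
    using that unitary_mat_of_normalized_cols[OF ws, folded W_def] by blast
qed

section \<open>Spectral theorem for Hermitian matrices\<close>

lemma hermitian_adjoint_congruence:
  fixes H W :: "'a :: conjugatable_field mat"
  assumes "H \<in> carrier_mat n n" "mat_adjoint H = H" "W \<in> carrier_mat n n"
  shows "mat_adjoint (mat_adjoint W * H * W) = mat_adjoint W * H * W"
  using assms by (simp add: mat_adjoint_mult[of _ n n _ n] assoc_mult_mat[of _ n n _ n _ n])

lemma adjoint_mult_congruence:
  fixes H U V :: "'a :: conjugatable_field mat"
  assumes "H \<in> carrier_mat n n" "U \<in> carrier_mat n n" "V \<in> carrier_mat n n"
  shows "mat_adjoint (U * V) * H * (U * V) = mat_adjoint V * (mat_adjoint U * H * U) * V"
  using assms by (simp add: mat_adjoint_mult[of U n n V n] assoc_mult_mat[of _ n n _ n _ n]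
      mult_carrier_mat[of _ n n _ n])

lemma unitary_mult:
  fixes U V :: "'a :: conjugatable_field mat"
  assumes "U \<in> carrier_mat n n" "mat_adjoint U * U = 1\<^sub>m n"
    and "V \<in> carrier_mat n n" "mat_adjoint V * V = 1\<^sub>m n"
  shows "mat_adjoint (U * V) * (U * V) = 1\<^sub>m n"
  using adjoint_mult_congruence[OF one_carrier_mat assms(1,3)] assms by simp

lemma mat_adjoint_four_block_diag:
  fixes A D :: "'a :: conjugatable_field mat"
  assumes "A \<in> carrier_mat k k" "D \<in> carrier_mat n n"
  shows "mat_adjoint (four_block_mat A (0\<^sub>m k n) (0\<^sub>m n k) D)
    = four_block_mat (mat_adjoint A) (0\<^sub>m k n) (0\<^sub>m n k) (mat_adjoint D)"
  by (rule eq_matI) (use assms in auto)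

lemma mult_four_block_diag:
  fixes A A' D D' :: "'a :: semiring_1 mat"
  assumes "A \<in> carrier_mat k k" "A' \<in> carrier_mat k k" "D \<in> carrier_mat n n" "D' \<in> carrier_mat n n"
  shows "four_block_mat A (0\<^sub>m k n) (0\<^sub>m n k) D * four_block_mat A' (0\<^sub>m k n) (0\<^sub>m n k) D'
    = four_block_mat (A * A') (0\<^sub>m k n) (0\<^sub>m n k) (D * D')"
  using assms by (subst mult_four_block_mat) auto

lemma unitary_four_block_one:
  fixes U E H :: "'a :: conjugatable_field mat"
  assumes U: "U \<in> carrier_mat m m" "mat_adjoint U * U = 1\<^sub>m m"
    and E: "E \<in> carrier_mat 1 1" and H: "H \<in> carrier_mat m m"
  defines "V \<equiv> four_block_mat (1\<^sub>m 1) (0\<^sub>m 1 m) (0\<^sub>m m 1) U"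
  shows "V \<in> carrier_mat (Suc m) (Suc m)" "mat_adjoint V * V = 1\<^sub>m (Suc m)"
    "mat_adjoint V * four_block_mat E (0\<^sub>m 1 m) (0\<^sub>m m 1) H * V
      = four_block_mat E (0\<^sub>m 1 m) (0\<^sub>m m 1) (mat_adjoint U * H * U)"
proof -
  have V_adj: "mat_adjoint V = four_block_mat (1\<^sub>m 1) (0\<^sub>m 1 m) (0\<^sub>m m 1) (mat_adjoint U)"
    unfolding V_def using mat_adjoint_four_block_diag[OF _ U(1)] by simp
  show "V \<in> carrier_mat (Suc m) (Suc m)"
    unfolding V_def using four_block_carrier_mat[OF one_carrier_mat[of 1] U(1)] by simp
  show "mat_adjoint V * V = 1\<^sub>m (Suc m)"
    unfolding V_adj unfolding V_def using U by (simp add: mult_four_block_diag)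
  show "mat_adjoint V * four_block_mat E (0\<^sub>m 1 m) (0\<^sub>m m 1) H * V
      = four_block_mat E (0\<^sub>m 1 m) (0\<^sub>m m 1) (mat_adjoint U * H * U)"
    unfolding V_adj unfolding V_def using U E H
    by (simp add: mult_four_block_diag mult_carrier_mat[of _ m m])
qed

lemma hermitian_first_col_block:
  fixes A :: "'a :: conjugatable_field mat"
  assumes A: "A \<in> carrier_mat (Suc n) (Suc n)" and herm: "mat_adjoint A = A"
    and col0: "\<And>i. i < Suc n \<Longrightarrow> A $$ (i, 0) = (if i = 0 then e else 0)"
  defines "A' \<equiv> mat n n (\<lambda>(i, j). A $$ (Suc i, Suc j))"
  shows "A = four_block_mat (mat 1 1 (\<lambda>_. e)) (0\<^sub>m 1 n) (0\<^sub>m n 1) A'"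
    and "mat_adjoint A' = A'"
proof -
  have entry: "A $$ (j, i) = conjugate (A $$ (i, j))" if "i < Suc n" "j < Suc n" for i j
    using arg_cong[OF herm, of "\<lambda>M. M $$ (j, i)"] A that by auto
  have row0: "A $$ (0, j) = (if j = 0 then e else 0)" if "j < Suc n" for j
    using col0[of j] entry[of j 0] that by (cases "j = 0") auto
  show "A = four_block_mat (mat 1 1 (\<lambda>_. e)) (0\<^sub>m 1 n) (0\<^sub>m n 1) A'"
    by (rule eq_matI) (use A col0 row0 in \<open>auto simp: A'_def\<close>)
  show "mat_adjoint A' = A'"
  proof (rule eq_matI)
    fix i j assume "i < dim_row A'" "j < dim_col A'"
    then show "mat_adjoint A' $$ (i, j) = A' $$ (i, j)"
      using entry[of "Suc j" "Suc i"] by (simp add: A'_def)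
  qed (simp_all add: A'_def)
qed

lemma hermitian_deflation:
  fixes H :: "complex mat"
  assumes H: "H \<in> carrier_mat (Suc m) (Suc m)" and herm: "mat_adjoint H = H"
    and ev: "eigenvector H v e"
  obtains W H' where "W \<in> carrier_mat (Suc m) (Suc m)" "mat_adjoint W * W = 1\<^sub>m (Suc m)"
    "H' \<in> carrier_mat m m" "mat_adjoint H' = H'"
    "mat_adjoint W * H * W = four_block_mat (mat 1 1 (\<lambda>_. e)) (0\<^sub>m 1 m) (0\<^sub>m m 1) H'"
proof -
  let ?n = "Suc m"
  have v: "v \<in> carrier_vec ?n" "v \<noteq> 0\<^sub>v ?n" and Hv: "H *\<^sub>v v = e \<cdot>\<^sub>v v"
    using ev H unfolding eigenvector_def by auto
  obtain W c where W: "W \<in> carrier_mat ?n ?n" and WW: "mat_adjoint W * W = 1\<^sub>m ?n"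
    and W0: "col W 0 = c \<cdot>\<^sub>v v"
    using exists_unitary_first_col[OF v] by blast
  define A where "A = mat_adjoint W * H * W"
  have A: "A \<in> carrier_mat ?n ?n" unfolding A_def using W H by auto
  have W': "mat_adjoint W \<in> carrier_mat ?n ?n" and W0': "col W 0 \<in> carrier_vec ?n"
    using W by (simp_all add: carrier_vecI carrier_matD)
  have "col A 0 = (mat_adjoint W * H) *\<^sub>v col W 0"
    unfolding A_def by (rule col_mult2[OF mult_carrier_mat[OF W' H] W]) simp
  also have "\<dots> = mat_adjoint W *\<^sub>v (H *\<^sub>v col W 0)"
    by (rule assoc_mult_mat_vec[OF W' H W0'])
  also have "H *\<^sub>v col W 0 = e \<cdot>\<^sub>v col W 0"
    using H v Hv unfolding W0 by (simp add: mult_mat_vec smult_smult_assoc mult.commute)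
  also have "mat_adjoint W *\<^sub>v (e \<cdot>\<^sub>v col W 0) = e \<cdot>\<^sub>v (mat_adjoint W *\<^sub>v col W 0)"
    by (rule mult_mat_vec[OF W' W0'])
  also have "mat_adjoint W *\<^sub>v col W 0 = col (mat_adjoint W * W) 0"
    by (rule col_mult2[OF W' W, symmetric]) simp
  finally have col0: "col A 0 = e \<cdot>\<^sub>v col (mat_adjoint W * W) 0" .
  have "A $$ (i, 0) = (if i = 0 then e else 0)" if "i < ?n" for i
  proof -
    have "A $$ (i, 0) = col A 0 $ i" using A that by simp
    also have "\<dots> = (if i = 0 then e else 0)" unfolding col0 WW using that by simp
    finally show ?thesis .
  qed
  from hermitian_first_col_block[OF A _ this] hermitian_adjoint_congruence[OF H herm W]
  show ?thesis unfolding A_def by (intro that[OF W WW]) auto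
qed

lemma char_poly_four_block_one:
  fixes A :: "'a :: comm_ring_1 mat"
  assumes "A \<in> carrier_mat n n"
  shows "char_poly (four_block_mat (mat 1 1 (\<lambda>_. e)) (0\<^sub>m 1 n) (0\<^sub>m n 1) A) = [:- e, 1:] * char_poly A"
proof -
  have "char_poly (mat 1 1 (\<lambda>_. e)) = [:- e, 1:]"
    by (simp add: char_poly_defs det_def sign_def)
  then show ?thesis
    using char_poly_four_block_zeros_col[of "mat 1 1 (\<lambda>_. e)" "0\<^sub>m 1 n" n A] assms by simp
qed

lemma mat_diag_Cons:
  "four_block_mat (mat 1 1 (\<lambda>_. e)) (0\<^sub>m 1 n) (0\<^sub>m n 1) (mat_diag n ((!) es))
    = mat_diag (Suc n) ((!) (e # es))"
  by (rule eq_matI) (auto simp: mat_diag_def nth_Cons')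

lemma char_poly_unitary_congruence:
  fixes H W :: "'a :: conjugatable_field mat"
  assumes "H \<in> carrier_mat n n" "W \<in> carrier_mat n n" "mat_adjoint W * W = 1\<^sub>m n"
  shows "char_poly (mat_adjoint W * H * W) = char_poly H"
proof (rule char_poly_similar)
  show "similar_mat (mat_adjoint W * H * W) H"
    unfolding similar_mat_def similar_mat_wit_def using assms mat_mult_left_right_inverse[OF _ assms(2,3)]
    by (intro exI[of _ "mat_adjoint W"] exI[of _ W]) auto
qed

lemma hermitian_unitary_diagonalization:
  fixes H :: "complex mat"
  assumes "H \<in> carrier_mat n n" "mat_adjoint H = H" "char_poly H = (\<Prod>e\<leftarrow>es. [:- e, 1:])"
  obtains U where "U \<in> carrier_mat n n" "mat_adjoint U * U = 1\<^sub>m n"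
    "mat_adjoint U * H * U = mat_diag n ((!) es)"
  using assms
proof (induction es arbitrary: n H thesis)
  case Nil
  then have "n = 0" using degree_monic_char_poly[of H n] by auto
  with Nil show ?case by (intro Nil(1)[of "1\<^sub>m 0"]) (auto intro!: eq_matI simp: mat_diag_def)
next
  case (Cons e es n H)
  note H = Cons(3) and herm = Cons(4)
  have "eigenvalue H e" unfolding eigenvalue_root_char_poly[OF H] Cons(5) by simp
  then obtain v where v: "eigenvector H v e" unfolding eigenvalue_def by auto
  then obtain m where n: "n = Suc m" using H unfolding eigenvector_def by (cases n) auto
  obtain W H' where W: "W \<in> carrier_mat n n" "mat_adjoint W * W = 1\<^sub>m n"
    and H': "H' \<in> carrier_mat m m" "mat_adjoint H' = H'"
    and block: "mat_adjoint W * H * W = four_block_mat (mat 1 1 (\<lambda>_. e)) (0\<^sub>m 1 m) (0\<^sub>m m 1) H'"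
    using hermitian_deflation[OF H[unfolded n] herm v] unfolding n by metis
  have "[:- e, 1:] * char_poly H' = char_poly H"
    unfolding char_poly_four_block_one[OF H'(1), symmetric] block[symmetric]
    by (rule char_poly_unitary_congruence[OF H W])
  also have "\<dots> = [:- e, 1:] * (\<Prod>e\<leftarrow>es. [:- e, 1:])"
    unfolding Cons(5) by (simp only: list.map prod_list.Cons)
  finally have "char_poly H' = (\<Prod>e\<leftarrow>es. [:- e, 1:])"
    by (metis mult_cancel_left pCons_eq_0_iff zero_neq_one)
  from Cons.IH[OF _ H' this] obtain U' where U': "U' \<in> carrier_mat m m"
    "mat_adjoint U' * U' = 1\<^sub>m m" "mat_adjoint U' * H' * U' = mat_diag m ((!) es)"
    by blast
  define V where "V = four_block_mat (1\<^sub>m 1) (0\<^sub>m 1 m) (0\<^sub>m m 1) U'"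
  have "mat 1 1 (\<lambda>_. e) \<in> carrier_mat 1 1" by simp
  note V = unitary_four_block_one[OF U'(1,2) this H'(1), folded V_def n]
  show ?case
  proof (rule Cons.prems(1)[of "W * V"])
    show "W * V \<in> carrier_mat n n" using W V by simp
    show "mat_adjoint (W * V) * (W * V) = 1\<^sub>m n" using unitary_mult W V by blast
    show "mat_adjoint (W * V) * H * (W * V) = mat_diag n ((!) (e # es))"
      unfolding adjoint_mult_congruence[OF H W(1) V(1)] block V(3) U'(3) n by (rule mat_diag_Cons)
  qed
qed

section \<open>Eigenvalues of the Gram matrix\<close>

lemma proots_prod_linear_factors:
  "proots (\<Prod>e\<leftarrow>es. [:- e, 1:]) = mset (es :: 'a :: idom list)"
proof (induction es)
  case (Cons e es)
  have "(\<Prod>e\<leftarrow>es. [:- e, 1:]) \<noteq> 0" by (auto simp: prod_list_zero_iff)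
  then have "proots ([:- e, 1:] * (\<Prod>e\<leftarrow>es. [:- e, 1:])) = {#e#} + mset es"
    by (subst proots_mult) (simp_all add: Cons.IH)
  then show ?case by simp
qed simp

lemma prod_list_map_mset_cong:
  "mset xs = mset ys \<Longrightarrow> (\<Prod>x\<leftarrow>xs. f x) = (\<Prod>y\<leftarrow>ys. (f y :: 'a :: comm_monoid_mult))"
  by (metis mset_map prod_mset_prod_list)

lemma eigenvalue_adjoint_mult_self_nonneg:
  fixes A :: "complex mat"
  assumes A: "A \<in> carrier_mat n m" and "eigenvalue (mat_adjoint A * A) a"
  shows "\<exists>r \<ge> 0. a = complex_of_real r"
proof -
  obtain v where "eigenvector (mat_adjoint A * A) v a"
    using assms(2) unfolding eigenvalue_def by auto
  then have v: "v \<in> carrier_vec m" "v \<noteq> 0\<^sub>v m" and Hv: "(mat_adjoint A * A) *\<^sub>v v = a \<cdot>\<^sub>v v"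
    unfolding eigenvector_def using A by auto
  have "cnj a * complex_of_real (cnorm2 v) = complex_of_real (cnorm2 (A *\<^sub>v v))"
    using cnorm2_mult_mat_vec[OF A v(1)] v(1)
    by (simp add: Hv cscalar_prod_self conjugate_smult_vec scalar_prod_smult_distrib[of v m])
  moreover have "cnorm2 v \<noteq> 0" using cnorm2_pos_iff[OF v(1)] v(2) by simp
  ultimately have "cnj a = complex_of_real (cnorm2 (A *\<^sub>v v) / cnorm2 v)"
    unfolding of_real_divide by (intro eq_divide_imp) simp_all
  then have "a = complex_of_real (cnorm2 (A *\<^sub>v v) / cnorm2 v)"
    by (metis complex_cnj_cnj complex_cnj_complex_of_real)
  then show ?thesis using divide_nonneg_nonneg[OF cnorm2_nonneg cnorm2_nonneg] by blast
qed
lemma char_poly_adjoint_mult_self: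
  fixes A :: "complex mat"
  assumes A: "A \<in> carrier_mat n m"
  obtains rs where "length rs = m" "sorted (rev rs)" "\<forall>r\<in>set rs. 0 \<le> r"
    "char_poly (mat_adjoint A * A) = (\<Prod>r\<leftarrow>rs. [:- complex_of_real r, 1:])"
proof -
  define H where "H = mat_adjoint A * A"
  have H: "H \<in> carrier_mat m m" unfolding H_def using A by auto
  obtain as where "smult (lead_coeff (char_poly H)) (\<Prod>a\<leftarrow>as. [:- a, 1:]) = char_poly H"
    and "length as = degree (char_poly H)"
    using fundamental_theorem_algebra_factorized by blast
  with degree_monic_char_poly[OF H]
  have cp: "char_poly H = (\<Prod>a\<leftarrow>as. [:- a, 1:])" and len: "length as = m" by auto
  have "a = complex_of_real (Re a) \<and> Re a \<ge> 0" if "a \<in> set as" for a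
  proof -
    have "eigenvalue (mat_adjoint A * A) a"
      unfolding H_def[symmetric] eigenvalue_root_char_poly[OF H] cp using linear_poly_root[OF that] .
    then show ?thesis using eigenvalue_adjoint_mult_self_nonneg[OF A] by force
  qed
  then have real: "as = map complex_of_real (map Re as)" "\<forall>r \<in> set (map Re as). r \<ge> 0"
    by (auto intro!: map_idI[symmetric])
  define rs where "rs = rev (sort (map Re as))"
  have "(\<Prod>r\<leftarrow>rs. [:- complex_of_real r, 1:]) = (\<Prod>r\<leftarrow>map Re as. [:- complex_of_real r, 1:])"
    unfolding rs_def by (rule prod_list_map_mset_cong) simp
  also have "\<dots> = char_poly H"
    unfolding cp by (subst (2) real(1)) (simp add: comp_def)
  finally show ?thesis
    using len real(2) by (intro that[of rs]) (auto simp: rs_def H_def)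
qed

lemma rev_sorted_list_of_multiset_mset: "sorted (rev xs) \<Longrightarrow> rev (sorted_list_of_multiset (mset xs)) = xs"
  by (metis properties_for_sort mset_rev rev_rev_ident sorted_list_of_multiset_mset)

lemma sorted_rev_map_sqrt: "sorted (rev xs) \<Longrightarrow> sorted (rev (map sqrt xs))"
  unfolding rev_map sorted_map by (rule sorted_wrt_mono_rel[rotated]) auto

lemma sv_list_complex_eq:
  assumes "char_poly (mat_adjoint A * A) = (\<Prod>r\<leftarrow>rs. [:- complex_of_real r, 1:])" "sorted (rev rs)"
  shows "sv_list_complex A = map sqrt rs"
proof -
  have "image_mset (\<lambda>z. sqrt (Re z)) (proots (char_poly (mat_adjoint A * A))) = mset (map sqrt rs)"
    unfolding assms(1) proots_prod_linear_factors[of "map complex_of_real rs", unfolded map_map comp_def]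
    by (simp add: multiset.map_comp comp_def)
  then show ?thesis
    unfolding sv_list_complex_def using rev_sorted_list_of_multiset_mset sorted_rev_map_sqrt assms(2)
    by metis
qed

lemma sv_list_real_eq:
  assumes "char_poly (mat_adjoint A * A) = (\<Prod>r\<leftarrow>rs. [:- r, 1:])" "sorted (rev rs)"
  shows "sv_list_real A = map sqrt rs"
  unfolding sv_list_real_def assms(1) proots_prod_linear_factors
  using rev_sorted_list_of_multiset_mset sorted_rev_map_sqrt assms(2) by (metis mset_map)


section \<open>Variational properties of singular values\<close>

lemma mat_diag_mult_vec:
  assumes "y \<in> carrier_vec n"
  shows "mat_diag n f *\<^sub>v y = vec n (\<lambda>i. f i * y $ i)"
proof (rule eq_vecI)
  fix i assume "i < dim_vec (vec n (\<lambda>i. f i * y $ i))"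
  then have i: "i < n" by simp
  have "(mat_diag n f *\<^sub>v y) $ i = (\<Sum>j\<in>{0..<n}. (if i = j then f j else 0) * y $ j)"
    using assms i by (simp add: mat_diag_def scalar_prod_def)
  also have "\<dots> = f i * y $ i"
    using i by (simp add: if_distrib[of "\<lambda>c. c * _"] cong: if_cong)
  finally show "(mat_diag n f *\<^sub>v y) $ i = vec n (\<lambda>i. f i * y $ i) $ i" using i by simp
qed (simp add: mat_diag_def)

lemma cscalar_prod_unitary:
  fixes U :: "complex mat"
  assumes "U \<in> carrier_mat n n" "mat_adjoint U * U = 1\<^sub>m n" "x \<in> carrier_vec n" "y \<in> carrier_vec n"
  shows "(U *\<^sub>v x) \<bullet>c (U *\<^sub>v y) = x \<bullet>c y"
  using cscalar_prod_adjoint[of U n n x "U *\<^sub>v y"] assms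
  by (simp add: assoc_mult_mat_vec[of _ n n _ n, symmetric])

lemma cscalar_prod_unit_vec:
  fixes y :: "'a :: conjugatable_field vec"
  assumes "y \<in> carrier_vec n" "k < n"
  shows "y \<bullet>c unit_vec n k = y $ k"
proof -
  have "conjugate (unit_vec n k :: 'a vec) = unit_vec n k"
    by (rule eq_vecI) (auto simp: unit_vec_def)
  then show ?thesis using assms by (simp add: scalar_prod_right_unit)
qed

lemma cscalar_prod_mat_diag_of_real:
  assumes "y \<in> carrier_vec n"
  shows "y \<bullet>c (mat_diag n (\<lambda>i. complex_of_real (r i)) *\<^sub>v y)
    = complex_of_real (\<Sum>i<n. r i * (cmod (y $ i))\<^sup>2)"
proof -
  have entry: "y $ i * conjugate (complex_of_real (r i) * y $ i) = complex_of_real (r i * (cmod (y $ i))\<^sup>2)"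
    for i
    by (simp only: conjugate_complex_def complex_cnj_mult complex_cnj_complex_of_real of_real_mult
        complex_norm_square ac_simps)
  have "y \<bullet>c (mat_diag n (\<lambda>i. complex_of_real (r i)) *\<^sub>v y)
    = (\<Sum>i\<in>{0..<n}. y $ i * conjugate (complex_of_real (r i) * y $ i))"
    using assms by (simp add: mat_diag_mult_vec scalar_prod_def)
  also have "\<dots> = complex_of_real (\<Sum>i<n. r i * (cmod (y $ i))\<^sup>2)"
    unfolding of_real_sum lessThan_atLeast0 by (rule sum.cong[OF refl entry])
  finally show ?thesis .
qed

lemma adjoint_mult_self_diagonalization:
  fixes A :: "complex mat"
  assumes A: "A \<in> carrier_mat n m"
  obtains U rs where "U \<in> carrier_mat m m" "mat_adjoint U * U = 1\<^sub>m m" "U * mat_adjoint U = 1\<^sub>m m"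
    "length rs = m" "\<forall>r\<in>set rs. 0 \<le> r" "sv_list_complex A = map sqrt rs"
    "\<And>y. y \<in> carrier_vec m \<Longrightarrow> cnorm2 (A *\<^sub>v (U *\<^sub>v y)) = (\<Sum>i<m. rs ! i * (cmod (y $ i))\<^sup>2)"
proof -
  obtain rs where rs: "length rs = m" "sorted (rev rs)" "\<forall>r\<in>set rs. 0 \<le> r"
    and cp: "char_poly (mat_adjoint A * A) = (\<Prod>r\<leftarrow>rs. [:- complex_of_real r, 1:])"
    using char_poly_adjoint_mult_self[OF A] by blast
  have H: "mat_adjoint A * A \<in> carrier_mat m m" using A by auto
  have "mat_adjoint (mat_adjoint A * A) = mat_adjoint A * A"
    using A by (simp add: mat_adjoint_mult[of _ m n _ m])
  moreover have "char_poly (mat_adjoint A * A) = (\<Prod>e\<leftarrow>map complex_of_real rs. [:- e, 1:])"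
    unfolding cp by (simp add: comp_def)
  ultimately obtain U where U: "U \<in> carrier_mat m m" "mat_adjoint U * U = 1\<^sub>m m"
    and D: "mat_adjoint U * (mat_adjoint A * A) * U = mat_diag m ((!) (map complex_of_real rs))"
    using hermitian_unitary_diagonalization[OF H] by metis
  have "cnorm2 (A *\<^sub>v (U *\<^sub>v y)) = (\<Sum>i<m. rs ! i * (cmod (y $ i))\<^sup>2)" if y: "y \<in> carrier_vec m" for y
  proof -
    have "mat_adjoint (A * U) * (A * U) = mat_adjoint U * (mat_adjoint A * A) * U"
      using A U H mult_carrier_mat[OF A U(1)]
      by (simp add: mat_adjoint_mult[OF A U(1)]
          assoc_mult_mat[of "mat_adjoint U" m m "mat_adjoint A" n "A * U" m]
          assoc_mult_mat[of "mat_adjoint U" m m "mat_adjoint A * A" m]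
          assoc_mult_mat[of "mat_adjoint A" m n A m U m])
    also have "\<dots> = mat_diag m (\<lambda>i. complex_of_real (rs ! i))"
      unfolding D by (rule eq_matI) (auto simp: mat_diag_def rs(1))
    finally have "mat_adjoint (A * U) * (A * U) = mat_diag m (\<lambda>i. complex_of_real (rs ! i))" .
    then have "complex_of_real (cnorm2 ((A * U) *\<^sub>v y))
      = complex_of_real (\<Sum>i<m. rs ! i * (cmod (y $ i))\<^sup>2)"
      using cnorm2_mult_mat_vec[of "A * U" n m y] A U y by (simp add: cscalar_prod_mat_diag_of_real)
    then show ?thesis using assoc_mult_mat_vec[OF A U(1) y] by (simp only: of_real_eq_iff)
  qed
  moreover have "U * mat_adjoint U = 1\<^sub>m m"
    using mat_mult_left_right_inverse[OF _ U] U by auto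
  ultimately show ?thesis
    using that U rs sv_list_complex_eq[OF cp rs(2)] by blast
qed

lemma sv_complex_eq_sqrt:
  assumes "sv_list_complex A = map sqrt rs" "length rs = m" "1 \<le> k" "k \<le> m"
  shows "sv_complex A k = sqrt (rs ! (k - 1))"
  using assms unfolding sv_complex_def by simp

lemma sv_list_complex_sorted:
  fixes A :: "complex mat"
  assumes "A \<in> carrier_mat n m"
  obtains rs where "length rs = m" "sorted (rev rs)" "\<forall>r\<in>set rs. 0 \<le> r"
    "sv_list_complex A = map sqrt rs"
proof -
  obtain rs where "length rs = m" "sorted (rev rs)" "\<forall>r\<in>set rs. 0 \<le> r"
    and "char_poly (mat_adjoint A * A) = (\<Prod>r\<leftarrow>rs. [:- complex_of_real r, 1:])"
    by (rule char_poly_adjoint_mult_self[OF assms])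
  with sv_list_complex_eq that show ?thesis by blast
qed

lemma sv_complex_nonneg:
  fixes A :: "complex mat"
  assumes "A \<in> carrier_mat n m" "1 \<le> k" "k \<le> m"
  shows "0 \<le> sv_complex A k"
proof -
  obtain rs where rs: "length rs = m" "sorted (rev rs)" "\<forall>r\<in>set rs. 0 \<le> r"
    "sv_list_complex A = map sqrt rs"
    using sv_list_complex_sorted[OF assms(1)] by blast
  have "sv_complex A k = sqrt (rs ! (k - 1))"
    by (rule sv_complex_eq_sqrt[OF rs(4,1)]; use assms in linarith)
  moreover have "rs ! (k - 1) \<in> set rs" using rs(1) assms by simp
  ultimately show ?thesis using rs(3) by simp
qed

lemma sv_complex_antimono:
  fixes A :: "complex mat"
  assumes "A \<in> carrier_mat n m" "1 \<le> j" "j \<le> k" "k \<le> m"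
  shows "sv_complex A k \<le> sv_complex A j"
proof -
  obtain rs where rs: "length rs = m" "sorted (rev rs)" "\<forall>r\<in>set rs. 0 \<le> r"
    "sv_list_complex A = map sqrt rs"
    using sv_list_complex_sorted[OF assms(1)] by blast
  then have "rs ! (k - 1) \<le> rs ! (j - 1)"
    using sorted_rev_nth_mono[OF rs(2), of "j - 1" "k - 1"] assms by simp
  moreover have "sv_complex A k = sqrt (rs ! (k - 1))" "sv_complex A j = sqrt (rs ! (j - 1))"
    by (rule sv_complex_eq_sqrt[OF rs(4,1)]; use assms in linarith)+
  ultimately show ?thesis by simp
qed

lemma sv_complex_coordinates:
  fixes A :: "complex mat"
  assumes A: "A \<in> carrier_mat n m"
  obtains U where "U \<in> carrier_mat m m" "mat_adjoint U * U = 1\<^sub>m m" "U * mat_adjoint U = 1\<^sub>m m"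
    "\<And>y. y \<in> carrier_vec m \<Longrightarrow>
      cnorm2 (A *\<^sub>v (U *\<^sub>v y)) = (\<Sum>i<m. (sv_complex A (Suc i))\<^sup>2 * (cmod (y $ i))\<^sup>2)"
    "\<And>y. y \<in> carrier_vec m \<Longrightarrow> cnorm2 (U *\<^sub>v y) = (\<Sum>i<m. (cmod (y $ i))\<^sup>2)"
proof -
  obtain U rs where U: "U \<in> carrier_mat m m" "mat_adjoint U * U = 1\<^sub>m m" "U * mat_adjoint U = 1\<^sub>m m"
    and rs: "length rs = m" "\<forall>r\<in>set rs. 0 \<le> r" "sv_list_complex A = map sqrt rs"
    and coords: "\<And>y. y \<in> carrier_vec m \<Longrightarrow> cnorm2 (A *\<^sub>v (U *\<^sub>v y)) = (\<Sum>i<m. rs ! i * (cmod (y $ i))\<^sup>2)"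
    by (rule adjoint_mult_self_diagonalization[OF A]) blast
  have "(sv_complex A (Suc i))\<^sup>2 = rs ! i" if "i < m" for i
  proof -
    have "sv_complex A (Suc i) = sqrt (rs ! i)"
      using sv_complex_eq_sqrt[OF rs(3,1), of "Suc i"] that by simp
    moreover have "rs ! i \<in> set rs" using rs(1) that by simp
    ultimately show ?thesis using rs(2) by simp
  qed
  moreover have "cnorm2 (U *\<^sub>v y) = (\<Sum>i<m. (cmod (y $ i))\<^sup>2)" if "y \<in> carrier_vec m" for y
    using cnorm2_unitary_mult[OF U(1,2) that] that by (simp add: cnorm2_def)
  ultimately show ?thesis
    using that[OF U] coords by simp
qed

lemma unitary_mult_adjoint_mult_vec:
  assumes "U \<in> carrier_mat n n" "U * mat_adjoint U = 1\<^sub>m n" "x \<in> carrier_vec n"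
  shows "x = U *\<^sub>v (mat_adjoint U *\<^sub>v x)" "mat_adjoint U *\<^sub>v x \<in> carrier_vec n"
proof -
  show "mat_adjoint U *\<^sub>v x \<in> carrier_vec n"
    using mult_mat_vec_carrier[OF mat_adjoint_carrier[OF assms(1)] assms(3)] .
  then show "x = U *\<^sub>v (mat_adjoint U *\<^sub>v x)"
    using assms by (simp add: assoc_mult_mat_vec[of _ n n _ n, symmetric])
qed

lemma sum_weighted_unit_vec:
  assumes "k < n"
  shows "(\<Sum>i<n. f i * (cmod (unit_vec n k $ i))\<^sup>2) = f k"
proof -
  have "(\<Sum>i<n. f i * (cmod (unit_vec n k $ i))\<^sup>2) = (\<Sum>i<n. if i = k then f i else 0)"
    by (rule sum.cong) (auto simp: unit_vec_def)
  then show ?thesis using assms by simp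
qed

lemma sum_weighted_le_bound:
  fixes r w :: "'i \<Rightarrow> real"
  assumes "\<And>i. i \<in> I \<Longrightarrow> 0 \<le> w i" "\<And>i. i \<in> I \<Longrightarrow> w i \<noteq> 0 \<Longrightarrow> r i \<le> c"
  shows "(\<Sum>i\<in>I. r i * w i) \<le> c * (\<Sum>i\<in>I. w i)"
  unfolding sum_distrib_left
proof (rule sum_mono)
  fix i assume "i \<in> I"
  then show "r i * w i \<le> c * w i"
    using assms[of i] by (cases "w i = 0") (auto intro: mult_right_mono)
qed

lemma bound_le_sum_weighted:
  fixes r w :: "'i \<Rightarrow> real"
  assumes "\<And>i. i \<in> I \<Longrightarrow> 0 \<le> w i" "\<And>i. i \<in> I \<Longrightarrow> w i \<noteq> 0 \<Longrightarrow> c \<le> r i"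
  shows "c * (\<Sum>i\<in>I. w i) \<le> (\<Sum>i\<in>I. r i * w i)"
  unfolding sum_distrib_left
proof (rule sum_mono)
  fix i assume "i \<in> I"
  then show "c * w i \<le> r i * w i"
    using assms[of i] by (cases "w i = 0") (auto intro: mult_right_mono)
qed

lemma cnorm2_mult_le_sv_complex_first:
  fixes A :: "complex mat"
  assumes A: "A \<in> carrier_mat n m" and x: "x \<in> carrier_vec m"
  shows "cnorm2 (A *\<^sub>v x) \<le> (sv_complex A 1)\<^sup>2 * cnorm2 x"
proof -
  obtain U where U: "U \<in> carrier_mat m m" "U * mat_adjoint U = 1\<^sub>m m"
    and coords: "\<And>y. y \<in> carrier_vec m \<Longrightarrow>
      cnorm2 (A *\<^sub>v (U *\<^sub>v y)) = (\<Sum>i<m. (sv_complex A (Suc i))\<^sup>2 * (cmod (y $ i))\<^sup>2)"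
      "\<And>y. y \<in> carrier_vec m \<Longrightarrow> cnorm2 (U *\<^sub>v y) = (\<Sum>i<m. (cmod (y $ i))\<^sup>2)"
    by (rule sv_complex_coordinates[OF A]) blast
  note y = unitary_mult_adjoint_mult_vec[OF U x]
  have "(\<Sum>i<m. (sv_complex A (Suc i))\<^sup>2 * (cmod ((mat_adjoint U *\<^sub>v x) $ i))\<^sup>2)
    \<le> (sv_complex A 1)\<^sup>2 * (\<Sum>i<m. (cmod ((mat_adjoint U *\<^sub>v x) $ i))\<^sup>2)"
    by (rule sum_weighted_le_bound)
      (auto intro!: power_mono sv_complex_antimono[OF A] sv_complex_nonneg[OF A])
  then show ?thesis using coords[OF y(2)] y(1) by simp
qed

lemma sv_complex_last_le_cnorm2_mult:
  fixes A :: "complex mat"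
  assumes A: "A \<in> carrier_mat n m" and x: "x \<in> carrier_vec m"
  shows "(sv_complex A m)\<^sup>2 * cnorm2 x \<le> cnorm2 (A *\<^sub>v x)"
proof -
  obtain U where U: "U \<in> carrier_mat m m" "U * mat_adjoint U = 1\<^sub>m m"
    and coords: "\<And>y. y \<in> carrier_vec m \<Longrightarrow>
      cnorm2 (A *\<^sub>v (U *\<^sub>v y)) = (\<Sum>i<m. (sv_complex A (Suc i))\<^sup>2 * (cmod (y $ i))\<^sup>2)"
      "\<And>y. y \<in> carrier_vec m \<Longrightarrow> cnorm2 (U *\<^sub>v y) = (\<Sum>i<m. (cmod (y $ i))\<^sup>2)"
    by (rule sv_complex_coordinates[OF A]) blast
  note y = unitary_mult_adjoint_mult_vec[OF U x]
  have "(sv_complex A m)\<^sup>2 * (\<Sum>i<m. (cmod ((mat_adjoint U *\<^sub>v x) $ i))\<^sup>2)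
    \<le> (\<Sum>i<m. (sv_complex A (Suc i))\<^sup>2 * (cmod ((mat_adjoint U *\<^sub>v x) $ i))\<^sup>2)"
    by (rule bound_le_sum_weighted)
      (auto intro!: power_mono sv_complex_antimono[OF A] sv_complex_nonneg[OF A])
  then show ?thesis using coords[OF y(2)] y(1) by simp
qed

lemma sv_complex_top_vector:
  fixes A :: "complex mat"
  assumes A: "A \<in> carrier_mat n m" and m: "0 < m"
  obtains u where "u \<in> carrier_vec m" "cnorm2 u = 1" "cnorm2 (A *\<^sub>v u) = (sv_complex A 1)\<^sup>2"
    "\<And>x. x \<in> carrier_vec m \<Longrightarrow> x \<bullet>c u = 0 \<Longrightarrow> cnorm2 (A *\<^sub>v x) \<le> (sv_complex A 2)\<^sup>2 * cnorm2 x"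
proof -
  obtain U where U: "U \<in> carrier_mat m m" "mat_adjoint U * U = 1\<^sub>m m" "U * mat_adjoint U = 1\<^sub>m m"
    and coords: "\<And>y. y \<in> carrier_vec m \<Longrightarrow>
      cnorm2 (A *\<^sub>v (U *\<^sub>v y)) = (\<Sum>i<m. (sv_complex A (Suc i))\<^sup>2 * (cmod (y $ i))\<^sup>2)"
      "\<And>y. y \<in> carrier_vec m \<Longrightarrow> cnorm2 (U *\<^sub>v y) = (\<Sum>i<m. (cmod (y $ i))\<^sup>2)"
    by (rule sv_complex_coordinates[OF A]) blast
  define u where "u = U *\<^sub>v unit_vec m 0"
  have e0: "unit_vec m 0 \<in> carrier_vec m" by simp
  have u: "u \<in> carrier_vec m" unfolding u_def using U by simp
  moreover have "cnorm2 u = 1" "cnorm2 (A *\<^sub>v u) = (sv_complex A 1)\<^sup>2"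
    unfolding u_def using coords[OF e0] sum_weighted_unit_vec[OF m, of "\<lambda>_. 1"]
      sum_weighted_unit_vec[OF m] by simp_all
  moreover have "cnorm2 (A *\<^sub>v x) \<le> (sv_complex A 2)\<^sup>2 * cnorm2 x"
    if x: "x \<in> carrier_vec m" and xu: "x \<bullet>c u = 0" for x
  proof -
    note y = unitary_mult_adjoint_mult_vec[OF U(1,3) x]
    have "(mat_adjoint U *\<^sub>v x) $ 0 = 0"
      using xu y m cscalar_prod_unitary[OF U(1,2) y(2) e0] cscalar_prod_unit_vec[OF y(2) m]
      unfolding u_def by simp
    then have "(\<Sum>i<m. (sv_complex A (Suc i))\<^sup>2 * (cmod ((mat_adjoint U *\<^sub>v x) $ i))\<^sup>2)
      \<le> (sv_complex A 2)\<^sup>2 * (\<Sum>i<m. (cmod ((mat_adjoint U *\<^sub>v x) $ i))\<^sup>2)"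
      by (intro sum_weighted_le_bound)
        (auto intro!: power_mono sv_complex_antimono[OF A] sv_complex_nonneg[OF A] gr0I simp: Suc_le_eq)
    then show ?thesis using coords[OF y(2)] y(1) by simp
  qed
  ultimately show ?thesis using that by blast
qed

lemma sv_complex_last_pos:
  fixes A :: "complex mat"
  assumes A: "A \<in> carrier_mat n m" and m: "0 < m"
    and inj: "\<And>x. x \<in> carrier_vec m \<Longrightarrow> A *\<^sub>v x = 0\<^sub>v n \<Longrightarrow> x = 0\<^sub>v m"
  shows "0 < sv_complex A m"
proof -
  obtain U where U: "U \<in> carrier_mat m m"
    and coords: "\<And>y. y \<in> carrier_vec m \<Longrightarrow>
      cnorm2 (A *\<^sub>v (U *\<^sub>v y)) = (\<Sum>i<m. (sv_complex A (Suc i))\<^sup>2 * (cmod (y $ i))\<^sup>2)"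
      "\<And>y. y \<in> carrier_vec m \<Longrightarrow> cnorm2 (U *\<^sub>v y) = (\<Sum>i<m. (cmod (y $ i))\<^sup>2)"
    by (rule sv_complex_coordinates[OF A]) blast
  define z where "z = U *\<^sub>v unit_vec m (m - 1)"
  have e: "unit_vec m (m - 1) \<in> carrier_vec m" and k: "m - 1 < m" using m by auto
  have z: "z \<in> carrier_vec m" unfolding z_def using U by simp
  have z1: "cnorm2 z = 1" and Az: "cnorm2 (A *\<^sub>v z) = (sv_complex A m)\<^sup>2"
    unfolding z_def using coords[OF e] sum_weighted_unit_vec[OF k, of "\<lambda>_. 1"]
      sum_weighted_unit_vec[OF k] m by simp_all
  have "z \<noteq> 0\<^sub>v m"
  proof
    assume "z = 0\<^sub>v m"
    then show False using z1 by (simp add: cnorm2_def)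
  qed
  then have "A *\<^sub>v z \<noteq> 0\<^sub>v n" using inj[OF z] by blast
  moreover have "A *\<^sub>v z \<in> carrier_vec n" using A z by simp
  ultimately have "0 < (sv_complex A m)\<^sup>2"
    using cnorm2_pos_iff[of "A *\<^sub>v z" n] Az by simp
  then have "sv_complex A m \<noteq> 0" by auto
  moreover have "0 \<le> sv_complex A m" using sv_complex_nonneg[OF A] m by simp
  ultimately show ?thesis by linarith
qed

lemma exists_orthogonal_sv_complex_second_le:
  fixes A :: "complex mat"
  assumes A: "A \<in> carrier_mat n m" and m: "2 \<le> m" and v: "v \<in> carrier_vec m"
  obtains x where "x \<in> carrier_vec m" "x \<noteq> 0\<^sub>v m" "x \<bullet>c v = 0"
    "(sv_complex A 2)\<^sup>2 * cnorm2 x \<le> cnorm2 (A *\<^sub>v x)"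
proof -
  obtain U where U: "U \<in> carrier_mat m m" "mat_adjoint U * U = 1\<^sub>m m"
    and coords: "\<And>y. y \<in> carrier_vec m \<Longrightarrow>
      cnorm2 (A *\<^sub>v (U *\<^sub>v y)) = (\<Sum>i<m. (sv_complex A (Suc i))\<^sup>2 * (cmod (y $ i))\<^sup>2)"
      "\<And>y. y \<in> carrier_vec m \<Longrightarrow> cnorm2 (U *\<^sub>v y) = (\<Sum>i<m. (cmod (y $ i))\<^sup>2)"
    by (rule sv_complex_coordinates[OF A]) blast
  define w where "w = mat_adjoint U *\<^sub>v v"
  have w: "w \<in> carrier_vec m" unfolding w_def using mult_mat_vec_carrier[OF mat_adjoint_carrier[OF U(1)] v] .
  \<comment> \<open>A nonzero combination of the first two coordinate vectors orthogonal to \<open>w\<close>\<close>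
  define a where "a = (if w $ 0 = 0 then 1 else cnj (w $ 1))"
  define b where "b = (if w $ 0 = 0 then 0 else - cnj (w $ 0))"
  define y where "y = a \<cdot>\<^sub>v unit_vec m 0 + b \<cdot>\<^sub>v unit_vec m 1"
  have y: "y \<in> carrier_vec m" unfolding y_def by simp
  have y_index: "y $ i = (if i = 0 then a else if i = 1 then b else 0)" if "i < m" for i
    unfolding y_def using that m by auto
  have "y \<bullet>c w = a * cnj (w $ 0) + b * cnj (w $ 1)"
    unfolding y_def using w m
    by (simp add: add_scalar_prod_distrib[of _ m] smult_scalar_prod_distrib[of _ m] scalar_prod_left_unit)
  then have "(U *\<^sub>v y) \<bullet>c v = 0"
    using cscalar_prod_adjoint[OF U(1) y v] unfolding w_def[symmetric] a_def b_def by simp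
  moreover have "U *\<^sub>v y \<noteq> 0\<^sub>v m"
  proof -
    have "y \<noteq> 0\<^sub>v m" using y_index[of 0] y_index[of 1] m by (auto simp: a_def b_def split: if_splits)
    then have "0 < cnorm2 y" using cnorm2_pos_iff[OF y] by simp
    then show ?thesis using cnorm2_pos_iff[of "U *\<^sub>v y" m] cnorm2_unitary_mult[OF U y] U y by auto
  qed
  moreover have "(sv_complex A 2)\<^sup>2 * (\<Sum>i<m. (cmod (y $ i))\<^sup>2)
    \<le> (\<Sum>i<m. (sv_complex A (Suc i))\<^sup>2 * (cmod (y $ i))\<^sup>2)"
    using m by (intro bound_le_sum_weighted)
      (auto intro!: power_mono sv_complex_antimono[OF A] sv_complex_nonneg[OF A] simp: y_index split: if_splits)
  ultimately show ?thesis
    using that[of "U *\<^sub>v y"] U y coords[OF y] by simp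
qed

section \<open>Singular values of products\<close>

lemma power2_mult_le_imp_le:
  fixes a b c :: real
  assumes "a\<^sup>2 * c \<le> b\<^sup>2 * c" "0 < c" "0 \<le> b"
  shows "a \<le> b"
proof (rule power2_le_imp_le)
  show "a\<^sup>2 \<le> b\<^sup>2" using mult_le_cancel_right_pos[OF assms(2)] assms(1) by blast
qed (rule assms(3))

lemma invertible_mat_obtain_inverse:
  fixes A :: "'a :: semiring_1 mat"
  assumes A: "A \<in> carrier_mat n n" and "invertible_mat A"
  obtains B where "B \<in> carrier_mat n n" "A * B = 1\<^sub>m n" "B * A = 1\<^sub>m n"
proof -
  from assms(2) obtain B where AB: "A * B = 1\<^sub>m (dim_row A)" and BA: "B * A = 1\<^sub>m (dim_row B)"
    unfolding invertible_mat_def inverts_mat_def by blast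
  have "dim_row B = n" "dim_col B = n"
    using arg_cong[OF AB, of dim_col] arg_cong[OF BA, of dim_col] A by auto
  then have "B \<in> carrier_mat n n" by (rule carrier_matI)
  moreover have "A * B = 1\<^sub>m n" "B * A = 1\<^sub>m n"
    using AB BA A \<open>dim_row B = n\<close> by auto
  ultimately show ?thesis by (rule that)
qed

lemma invertible_mat_mult_vec_eq_0:
  fixes A :: "'a :: comm_ring_1 mat"
  assumes A: "A \<in> carrier_mat n n" "invertible_mat A" and x: "x \<in> carrier_vec n"
    and "A *\<^sub>v x = 0\<^sub>v n"
  shows "x = 0\<^sub>v n"
proof -
  obtain B where B: "B \<in> carrier_mat n n" "B * A = 1\<^sub>m n"
    using invertible_mat_obtain_inverse[OF A] by blast
  have "x = B *\<^sub>v (A *\<^sub>v x)" using B A x by (simp add: assoc_mult_mat_vec[of _ n n _ n, symmetric])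
  also have "\<dots> = 0\<^sub>v n" using assms(4) B by (intro eq_vecI) (auto simp: scalar_prod_def)
  finally show ?thesis .
qed

lemma sv_complex_mult_first_ge_left:
  fixes A B :: "complex mat"
  assumes A: "A \<in> carrier_mat n m" and B: "B \<in> carrier_mat m m" "invertible_mat B" and m: "0 < m"
  shows "sv_complex A 1 * sv_complex B m \<le> sv_complex (A * B) 1"
proof -
  obtain u where u: "u \<in> carrier_vec m" "cnorm2 u = 1" "cnorm2 (A *\<^sub>v u) = (sv_complex A 1)\<^sup>2"
    by (rule sv_complex_top_vector[OF A m]) blast
  obtain C where C: "C \<in> carrier_mat m m" "B * C = 1\<^sub>m m"
    using invertible_mat_obtain_inverse[OF B] by blast
  define x where "x = C *\<^sub>v u"
  have x: "x \<in> carrier_vec m" and Bx: "B *\<^sub>v x = u"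
    unfolding x_def using C u B by (simp_all add: assoc_mult_mat_vec[of _ m m _ m, symmetric])
  have "(sv_complex A 1 * sv_complex B m)\<^sup>2 * cnorm2 x
    = (sv_complex A 1)\<^sup>2 * ((sv_complex B m)\<^sup>2 * cnorm2 x)" by (simp add: power_mult_distrib)
  also have "\<dots> \<le> (sv_complex A 1)\<^sup>2 * cnorm2 (B *\<^sub>v x)"
    by (rule mult_left_mono[OF sv_complex_last_le_cnorm2_mult[OF B(1) x]]) simp
  also have "\<dots> = cnorm2 ((A * B) *\<^sub>v x)"
    using u A B x by (simp add: Bx assoc_mult_mat_vec[of _ n m _ m])
  also have "\<dots> \<le> (sv_complex (A * B) 1)\<^sup>2 * cnorm2 x"
    using cnorm2_mult_le_sv_complex_first[of "A * B" n m x] A B x by simp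
  finally show ?thesis
  proof (rule power2_mult_le_imp_le)
    show "0 < cnorm2 x" using cnorm2_pos_iff[OF x] u Bx B x by (auto simp: cnorm2_def)
    show "0 \<le> sv_complex (A * B) 1" using sv_complex_nonneg[of "A * B" n m 1] A B m by simp
  qed
qed

lemma sv_complex_mult_first_ge_right:
  fixes A B :: "complex mat"
  assumes A: "A \<in> carrier_mat n m" and B: "B \<in> carrier_mat m k" and k: "0 < k"
  shows "sv_complex A m * sv_complex B 1 \<le> sv_complex (A * B) 1"
proof -
  obtain u where u: "u \<in> carrier_vec k" "cnorm2 u = 1" "cnorm2 (B *\<^sub>v u) = (sv_complex B 1)\<^sup>2"
    by (rule sv_complex_top_vector[OF B k]) blast
  have "(sv_complex A m * sv_complex B 1)\<^sup>2 * cnorm2 u = (sv_complex A m)\<^sup>2 * cnorm2 (B *\<^sub>v u)"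
    using u by (simp add: power_mult_distrib)
  also have "\<dots> \<le> cnorm2 (A *\<^sub>v (B *\<^sub>v u))"
    using sv_complex_last_le_cnorm2_mult[OF A mult_mat_vec_carrier[OF B u(1)]] .
  also have "\<dots> \<le> (sv_complex (A * B) 1)\<^sup>2 * cnorm2 u"
    using cnorm2_mult_le_sv_complex_first[of "A * B" n k u] A B u
    by (simp add: assoc_mult_mat_vec[of _ n m _ k])
  finally show ?thesis
  proof (rule power2_mult_le_imp_le)
    show "0 < cnorm2 u" using u(2) by simp
    show "0 \<le> sv_complex (A * B) 1" using sv_complex_nonneg[OF mult_carrier_mat[OF A B], of 1] k by simp
  qed
qed

lemma sv_complex_mult_second_le_left:
  fixes A B :: "complex mat"
  assumes A: "A \<in> carrier_mat n m" and B: "B \<in> carrier_mat m k" and m: "0 < m" and k: "2 \<le> k"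
  shows "sv_complex (A * B) 2 \<le> sv_complex A 1 * sv_complex B 2"
proof -
  obtain u where u: "u \<in> carrier_vec k"
    and orth: "\<And>x. x \<in> carrier_vec k \<Longrightarrow> x \<bullet>c u = 0 \<Longrightarrow> cnorm2 (B *\<^sub>v x) \<le> (sv_complex B 2)\<^sup>2 * cnorm2 x"
    by (rule sv_complex_top_vector[OF B]) (use k in auto)
  obtain x where x: "x \<in> carrier_vec k" "x \<noteq> 0\<^sub>v k" "x \<bullet>c u = 0"
    and low: "(sv_complex (A * B) 2)\<^sup>2 * cnorm2 x \<le> cnorm2 ((A * B) *\<^sub>v x)"
    by (rule exists_orthogonal_sv_complex_second_le[OF mult_carrier_mat[OF A B] k u])
  have "(sv_complex (A * B) 2)\<^sup>2 * cnorm2 x \<le> cnorm2 (A *\<^sub>v (B *\<^sub>v x))"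
    using low A B x by (simp add: assoc_mult_mat_vec[of _ n m _ k])
  also have "\<dots> \<le> (sv_complex A 1)\<^sup>2 * cnorm2 (B *\<^sub>v x)"
    using cnorm2_mult_le_sv_complex_first[OF A] B x by simp
  also have "\<dots> \<le> (sv_complex A 1)\<^sup>2 * ((sv_complex B 2)\<^sup>2 * cnorm2 x)"
    by (rule mult_left_mono[OF orth[OF x(1,3)]]) simp
  finally have "(sv_complex (A * B) 2)\<^sup>2 * cnorm2 x \<le> (sv_complex A 1 * sv_complex B 2)\<^sup>2 * cnorm2 x"
    by (simp only: power_mult_distrib mult.assoc)
  then show ?thesis
  proof (rule power2_mult_le_imp_le)
    show "0 < cnorm2 x" using cnorm2_pos_iff[OF x(1)] x(2) by simp
    show "0 \<le> sv_complex A 1 * sv_complex B 2"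
      using sv_complex_nonneg[OF A, of 1] sv_complex_nonneg[OF B, of 2] m k by simp
  qed
qed

lemma sv_complex_mult_second_le_right:
  fixes A B :: "complex mat"
  assumes A: "A \<in> carrier_mat n m" and B: "B \<in> carrier_mat m k" and m: "2 \<le> m" and k: "2 \<le> k"
  shows "sv_complex (A * B) 2 \<le> sv_complex A 2 * sv_complex B 1"
proof -
  obtain u where u: "u \<in> carrier_vec m"
    and orth: "\<And>x. x \<in> carrier_vec m \<Longrightarrow> x \<bullet>c u = 0 \<Longrightarrow> cnorm2 (A *\<^sub>v x) \<le> (sv_complex A 2)\<^sup>2 * cnorm2 x"
    by (rule sv_complex_top_vector[OF A]) (use m in auto)
  have v: "mat_adjoint B *\<^sub>v u \<in> carrier_vec k"
    using mult_mat_vec_carrier[OF mat_adjoint_carrier[OF B] u] .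
  obtain x where x: "x \<in> carrier_vec k" "x \<noteq> 0\<^sub>v k" "x \<bullet>c (mat_adjoint B *\<^sub>v u) = 0"
    and low: "(sv_complex (A * B) 2)\<^sup>2 * cnorm2 x \<le> cnorm2 ((A * B) *\<^sub>v x)"
    by (rule exists_orthogonal_sv_complex_second_le[OF mult_carrier_mat[OF A B] k v])
  have Bx: "B *\<^sub>v x \<in> carrier_vec m" "(B *\<^sub>v x) \<bullet>c u = 0"
    using B x cscalar_prod_adjoint[OF B x(1) u] by auto
  have "(sv_complex (A * B) 2)\<^sup>2 * cnorm2 x \<le> cnorm2 (A *\<^sub>v (B *\<^sub>v x))"
    using low A B x by (simp add: assoc_mult_mat_vec[of _ n m _ k])
  also have "\<dots> \<le> (sv_complex A 2)\<^sup>2 * cnorm2 (B *\<^sub>v x)"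
    using orth[OF Bx] .
  also have "\<dots> \<le> (sv_complex A 2)\<^sup>2 * ((sv_complex B 1)\<^sup>2 * cnorm2 x)"
    by (rule mult_left_mono[OF cnorm2_mult_le_sv_complex_first[OF B x(1)]]) simp
  finally have "(sv_complex (A * B) 2)\<^sup>2 * cnorm2 x \<le> (sv_complex A 2 * sv_complex B 1)\<^sup>2 * cnorm2 x"
    by (simp only: power_mult_distrib mult.assoc)
  then show ?thesis
  proof (rule power2_mult_le_imp_le)
    show "0 < cnorm2 x" using cnorm2_pos_iff[OF x(1)] x(2) by simp
    show "0 \<le> sv_complex A 2 * sv_complex B 1"
      using sv_complex_nonneg[OF A, of 2] sv_complex_nonneg[OF B, of 1] m k by simp
  qed
qed

lemma sv_complex_pos:
  fixes A :: "complex mat"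
  assumes A: "A \<in> carrier_mat n m" and k: "1 \<le> k" "k \<le> m"
    and inj: "\<And>x. x \<in> carrier_vec m \<Longrightarrow> A *\<^sub>v x = 0\<^sub>v n \<Longrightarrow> x = 0\<^sub>v m"
  shows "0 < sv_complex A k"
proof -
  have "0 < sv_complex A m" by (rule sv_complex_last_pos[OF A _ inj]) (use k in linarith)
  moreover have "sv_complex A m \<le> sv_complex A k" by (rule sv_complex_antimono[OF A k order_refl])
  ultimately show ?thesis by linarith
qed

lemma ratio_product_le:
  fixes a1 a2 ad b1 b2 c1 c2 :: real
  assumes "0 < ad" "ad \<le> a2" "0 < a1" "0 \<le> b1" "0 < b2" "ad * b1 \<le> c1" "0 < c2" "c2 \<le> a1 * b2"
  shows "ad\<^sup>2 / a1\<^sup>2 * (a1 / a2) * (b1 / b2) \<le> c1 / c2"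
proof -
  have "ad\<^sup>2 / a1\<^sup>2 * (a1 / a2) * (b1 / b2) = (ad * b1) / (a1 * b2) * (ad / a2)"
    using assms by (simp add: field_simps power2_eq_square)
  also have "\<dots> \<le> (ad * b1) / (a1 * b2)"
    using assms by (intro mult_left_le) auto
  also have "\<dots> \<le> c1 / c2"
  proof (rule frac_le)
    show "0 \<le> c1" using assms mult_nonneg_nonneg[of ad b1] by linarith
  qed (use assms in auto)
  finally show ?thesis .
qed

lemma sv_complex_ratio_mult_ge:
  fixes w1 w2 :: "complex mat"
  assumes d: "2 \<le> d"
    and w1: "w1 \<in> carrier_mat d d" "invertible_mat w1" and w2: "w2 \<in> carrier_mat d d" "invertible_mat w2"
  shows "(sv_complex w1 d)\<^sup>2 / (sv_complex w1 1)\<^sup>2 * (sv_complex w1 1 / sv_complex w1 2)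
      * (sv_complex w2 1 / sv_complex w2 2) \<le> sv_complex (w1 * w2) 1 / sv_complex (w1 * w2) 2"
    and "(sv_complex w2 d)\<^sup>2 / (sv_complex w2 1)\<^sup>2 * (sv_complex w1 1 / sv_complex w1 2)
      * (sv_complex w2 1 / sv_complex w2 2) \<le> sv_complex (w1 * w2) 1 / sv_complex (w1 * w2) 2"
proof -
  have w: "w1 * w2 \<in> carrier_mat d d" using w1 w2 by simp
  note inj1 = invertible_mat_mult_vec_eq_0[OF w1]
  note inj2 = invertible_mat_mult_vec_eq_0[OF w2]
  have inj: "x = 0\<^sub>v d" if "x \<in> carrier_vec d" "(w1 * w2) *\<^sub>v x = 0\<^sub>v d" for x
    using that inj1[of "w2 *\<^sub>v x"] inj2[of x] w1 w2 by (simp add: assoc_mult_mat_vec[of _ d d _ d])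
  have pos: "0 < sv_complex w1 k" "0 < sv_complex w2 k" "0 < sv_complex (w1 * w2) k"
    if "1 \<le> k" "k \<le> d" for k
    using sv_complex_pos[OF w1(1) that inj1] sv_complex_pos[OF w2(1) that inj2] sv_complex_pos[OF w that inj]
    by blast+
  have mono: "sv_complex w1 d \<le> sv_complex w1 2" "sv_complex w2 d \<le> sv_complex w2 2"
    using sv_complex_antimono[OF w1(1)] sv_complex_antimono[OF w2(1)] d by auto
  show "(sv_complex w1 d)\<^sup>2 / (sv_complex w1 1)\<^sup>2 * (sv_complex w1 1 / sv_complex w1 2)
      * (sv_complex w2 1 / sv_complex w2 2) \<le> sv_complex (w1 * w2) 1 / sv_complex (w1 * w2) 2"
    using pos[of d] pos[of 1] pos[of 2] d mono(1)
      sv_complex_mult_first_ge_right[OF w1(1) w2(1)] sv_complex_mult_second_le_left[OF w1(1) w2(1)]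
    by (intro ratio_product_le) auto
  have "(sv_complex w2 d)\<^sup>2 / (sv_complex w2 1)\<^sup>2 * (sv_complex w2 1 / sv_complex w2 2)
      * (sv_complex w1 1 / sv_complex w1 2) \<le> sv_complex (w1 * w2) 1 / sv_complex (w1 * w2) 2"
    using pos[of d] pos[of 1] pos[of 2] d mono(2)
      sv_complex_mult_first_ge_left[OF w1(1) w2] sv_complex_mult_second_le_right[OF w1(1) w2(1)]
    by (intro ratio_product_le) (auto simp: mult.commute)
  then show "(sv_complex w2 d)\<^sup>2 / (sv_complex w2 1)\<^sup>2 * (sv_complex w1 1 / sv_complex w1 2)
      * (sv_complex w2 1 / sv_complex w2 2) \<le> sv_complex (w1 * w2) 1 / sv_complex (w1 * w2) 2"
    by (simp only: mult.assoc mult.commute[of "sv_complex w1 1 / sv_complex w1 2"])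
qed

section \<open>Real matrices\<close>

lemma sv_real_eq_sv_complex:
  fixes A :: "real mat"
  assumes A: "A \<in> carrier_mat n m"
  shows "sv_real A k = sv_complex (map_mat complex_of_real A) k"
proof -
  interpret hom: map_poly_inj_comm_ring_hom complex_of_real ..
  have adj: "mat_adjoint (map_mat complex_of_real A) = map_mat complex_of_real (mat_adjoint A)"
    by (rule eq_matI) auto
  have AA: "mat_adjoint A * A \<in> carrier_mat m m" using mult_carrier_mat[OF mat_adjoint_carrier[OF A] A] .
  have "mat_adjoint (map_mat complex_of_real A) * map_mat complex_of_real A
    = map_mat complex_of_real (mat_adjoint A * A)"
    unfolding adj by (rule of_real_hom.mat_hom_mult[OF mat_adjoint_carrier[OF A] A, symmetric])
  moreover obtain rs where rs: "sorted (rev rs)"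
    and cp: "char_poly (mat_adjoint (map_mat complex_of_real A) * map_mat complex_of_real A)
      = (\<Prod>r\<leftarrow>rs. [:- complex_of_real r, 1:])"
    using char_poly_adjoint_mult_self[of "map_mat complex_of_real A" n m] A by auto
  ultimately have "map_poly complex_of_real (char_poly (mat_adjoint A * A))
    = map_poly complex_of_real (\<Prod>r\<leftarrow>rs. [:- r, 1:])"
    by (simp add: of_real_hom.char_poly_hom[OF AA] hom.hom_prod_list comp_def)
  then have "char_poly (mat_adjoint A * A) = (\<Prod>r\<leftarrow>rs. [:- r, 1:])"
    by (rule hom.injectivity)
  then have "sv_list_real A = map sqrt rs" by (rule sv_list_real_eq[OF _ rs])
  then show ?thesis
    unfolding sv_real_def sv_complex_def sv_list_complex_eq[OF cp rs] by simp
qed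

lemma invertible_mat_of_real:
  fixes A :: "real mat"
  assumes A: "A \<in> carrier_mat n n" "invertible_mat A"
  shows "invertible_mat (map_mat complex_of_real A)"
proof -
  obtain B where B: "B \<in> carrier_mat n n" "A * B = 1\<^sub>m n" "B * A = 1\<^sub>m n"
    using invertible_mat_obtain_inverse[OF A] by blast
  have "map_mat complex_of_real A * map_mat complex_of_real B = 1\<^sub>m n"
    "map_mat complex_of_real B * map_mat complex_of_real A = 1\<^sub>m n"
    using B A by (simp_all add: of_real_hom.mat_hom_mult[symmetric] of_real_hom.mat_hom_one)
  then show ?thesis
    unfolding invertible_mat_def inverts_mat_def using A B by auto
qed

theorem lemma2p4:
  fixes d :: nat
  assumes "d \<ge> 2"
  shows
   "(\<forall>(w1::real mat) w2 i. w1 \<in> carrier_mat d d \<and> w2 \<in> carrier_mat d d \<and>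
        invertible_mat w1 \<and> invertible_mat w2 \<and> i \<in> {1::nat, 2} \<longrightarrow>
        (let w = (if i = 1 then w1 else w2) in
         sv_real (w1 * w2) 1 / sv_real (w1 * w2) 2 \<ge>
           (sv_real w d)\<^sup>2 / (sv_real w 1)\<^sup>2 *
           (sv_real w1 1 / sv_real w1 2) * (sv_real w2 1 / sv_real w2 2)))
  \<and> (\<forall>(w1::complex mat) w2 i. w1 \<in> carrier_mat d d \<and> w2 \<in> carrier_mat d d \<and>
        invertible_mat w1 \<and> invertible_mat w2 \<and> i \<in> {1::nat, 2} \<longrightarrow>
        (let w = (if i = 1 then w1 else w2) in
         sv_complex (w1 * w2) 1 / sv_complex (w1 * w2) 2 \<ge>
           (sv_complex w d)\<^sup>2 / (sv_complex w 1)\<^sup>2 *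
           (sv_complex w1 1 / sv_complex w1 2) * (sv_complex w2 1 / sv_complex w2 2)))"
proof (intro conjI allI impI)
  fix w1 w2 :: "complex mat" and i :: nat
  assume "w1 \<in> carrier_mat d d \<and> w2 \<in> carrier_mat d d \<and>
    invertible_mat w1 \<and> invertible_mat w2 \<and> i \<in> {1, 2}"
  then show "let w = (if i = 1 then w1 else w2) in
    sv_complex (w1 * w2) 1 / sv_complex (w1 * w2) 2 \<ge>
      (sv_complex w d)\<^sup>2 / (sv_complex w 1)\<^sup>2 *
      (sv_complex w1 1 / sv_complex w1 2) * (sv_complex w2 1 / sv_complex w2 2)"
    using sv_complex_ratio_mult_ge[OF assms, of w1 w2] by auto
next
  fix w1 w2 :: "real mat" and i :: nat
  assume h: "w1 \<in> carrier_mat d d \<and> w2 \<in> carrier_mat d d \<and>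
    invertible_mat w1 \<and> invertible_mat w2 \<and> i \<in> {1, 2}"
  then have w1: "w1 \<in> carrier_mat d d" and w2: "w2 \<in> carrier_mat d d" by auto
  let ?c = "map_mat complex_of_real"
  have "sv_real (w1 * w2) k = sv_complex (?c w1 * ?c w2) k" for k
    unfolding of_real_hom.mat_hom_mult[OF w1 w2, symmetric]
    by (rule sv_real_eq_sv_complex[OF mult_carrier_mat[OF w1 w2]])
  moreover note sv_real_eq_sv_complex[OF w1] sv_real_eq_sv_complex[OF w2]
  moreover note sv_complex_ratio_mult_ge[OF assms, of "?c w1" "?c w2"]
  ultimately show "let w = (if i = 1 then w1 else w2) in
    sv_real (w1 * w2) 1 / sv_real (w1 * w2) 2 \<ge>
      (sv_real w d)\<^sup>2 / (sv_real w 1)\<^sup>2 *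
      (sv_real w1 1 / sv_real w1 2) * (sv_real w2 1 / sv_real w2 2)"
    using h invertible_mat_of_real[of _ d] by auto
qed

end
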